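(* Let $n\geq 3$, $y_1,\dots,y_n\in\mathbb{R}$, and let $r\in\{2,\dots,n\}$. Then $$-(n-2)y_1^2-(n-1)\sum_{\substack{1\leq i\leq n\\ i\neq 1,r}}y_i^2+(n-2)\sum_{i=2}^n y_1y_i+(n-1)\sum_{2\leq i<j\leq n}y_iy_j\leq \frac{(3n-1)(n-2)}{2(3n+5)}\Big(\sum_{i=1}^n y_i\Big)^2,$$ with equality if and only if $y_i=\frac32 y_1$ for all $i\in\{2,\dots,n\}\setminus\{r\}$ and $y_r=\frac92 y_1$. *)

theory Defs
  imports Complex_Main
begin

end

theory Submission
  imports Defs
begin

(* Put k = n - 2, A = {2..n} - {r}, a = y 1, b = y r and c the sum of y over A. The difference of
   the two sides splits into 3/2 (k + 1) times the variance sum of the y i (i in A) around their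
   mean c / k, plus the difference at the point where all these y i equal c / k. The latter is a
   quadratic form in a, b, c that is a positive combination of two squares and hence vanishes only
   on the line b = 9/2 a, c = 3k/2 a. *)

lemma sum_pairs_less:
  fixes f :: "'a::linorder \<Rightarrow> 'b::comm_ring_1"
  assumes "finite A"
  shows "2 * (\<Sum>(i, j)\<in>{(i, j). i \<in> A \<and> j \<in> A \<and> i < j}. f i * f j)
       = (\<Sum>i\<in>A. f i)\<^sup>2 - (\<Sum>i\<in>A. (f i)\<^sup>2)"
proof -
  define U where "U = {(i, j). i \<in> A \<and> j \<in> A \<and> i < j}"
  define L where "L = {(i, j). i \<in> A \<and> j \<in> A \<and> j < i}"
  have fin: "finite U" "finite L" "finite ((\<lambda>i. (i, i)) ` A)"
    using assms by (auto intro: finite_subset[of _ "A \<times> A"] simp: U_def L_def)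
  have square: "A \<times> A = (U \<union> L) \<union> (\<lambda>i. (i, i)) ` A"
    by (auto simp: U_def L_def)
  have lower: "(\<Sum>(i, j)\<in>L. f i * f j) = (\<Sum>(i, j)\<in>U. f i * f j)"
    by (rule sum.reindex_bij_witness[of _ prod.swap prod.swap]) (auto simp: U_def L_def)
  have diagonal: "(\<Sum>(i, j)\<in>(\<lambda>i. (i, i)) ` A. f i * f j) = (\<Sum>i\<in>A. (f i)\<^sup>2)"
    by (subst sum.reindex) (auto simp: inj_on_def power2_eq_square)
  have "(\<Sum>i\<in>A. f i)\<^sup>2 = (\<Sum>(i, j)\<in>A \<times> A. f i * f j)"
    by (simp add: power2_eq_square sum_product sum.cartesian_product)
  also have "\<dots> = (\<Sum>(i, j)\<in>U \<union> L. f i * f j) + (\<Sum>i\<in>A. (f i)\<^sup>2)"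
    unfolding square diagonal[symmetric] using fin
    by (intro sum.union_disjoint) (auto simp: U_def L_def)
  also have "(\<Sum>(i, j)\<in>U \<union> L. f i * f j) = (\<Sum>(i, j)\<in>U. f i * f j) + (\<Sum>(i, j)\<in>L. f i * f j)"
    using fin by (intro sum.union_disjoint) (auto simp: U_def L_def)
  finally show ?thesis unfolding lower U_def by (simp add: algebra_simps)
qed

lemma sum_squares_deviation_mean:
  fixes f :: "'a \<Rightarrow> real"
  assumes "finite A" "A \<noteq> {}"
  shows "(\<Sum>i\<in>A. (f i - sum f A / card A)\<^sup>2) = (\<Sum>i\<in>A. (f i)\<^sup>2) - (sum f A)\<^sup>2 / card A"
proof -
  define m where "m = sum f A / card A"
  have card: "card A > 0" using assms by (simp add: card_gt_0_iff)
  have "(\<Sum>i\<in>A. (f i - m)\<^sup>2) = (\<Sum>i\<in>A. (f i)\<^sup>2) - 2 * m * sum f A + card A * m\<^sup>2"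
    by (simp add: power2_diff sum.distrib sum_subtractf sum_distrib_left sum_distrib_right mult_ac)
  also have "\<dots> = (\<Sum>i\<in>A. (f i)\<^sup>2) - (sum f A)\<^sup>2 / card A"
    using card by (simp add: m_def field_simps power2_eq_square)
  finally show ?thesis unfolding m_def .
qed

(* The difference of the two sides when y i = c / k for all i in A, in the notation above. *)
definition mean_gap :: "real \<Rightarrow> real \<Rightarrow> real \<Rightarrow> real \<Rightarrow> real" where
  "mean_gap k a b c = k * (3*k + 5) / (2 * (3*k + 11)) * (a + b + c)\<^sup>2
     - (- k * a\<^sup>2 + k * a * b + k * a * c + (k + 1) * b * c + (k + 1) * (k - 3) / (2 * k) * c\<^sup>2)"

lemma mean_gap_sum_of_squares:
  assumes "k > 0"
  shows "2 * k * (3*k + 5) * (3*k + 11) * mean_gap k a b c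
       = (k * (3*k + 5) * (b - 9/2 * a) - (9*k + 11) * (c - 3*k/2 * a))\<^sup>2
         + 4 * (k + 1) * (3*k + 11) * (c - 3*k/2 * a)\<^sup>2"
proof -
  define \<alpha> where "\<alpha> = k * (3*k + 5) / (2 * (3*k + 11))"
  define \<gamma> where "\<gamma> = (k + 1) * (k - 3) / (2 * k)"
  have "\<alpha> * (2 * (3*k + 11)) = k * (3*k + 5)" "\<gamma> * (2 * k) = (k + 1) * (k - 3)"
    using assms by (simp_all add: \<alpha>_def \<gamma>_def)
  then show ?thesis
    unfolding mean_gap_def \<alpha>_def[symmetric] \<gamma>_def[symmetric] by algebra
qed

lemma mean_gap_nonneg:
  assumes "k > 0"
  shows "mean_gap k a b c \<ge> 0"
proof -
  define P where "P = 2 * k * (3*k + 5) * (3*k + 11)"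
  have "P > 0" "P * mean_gap k a b c \<ge> 0"
    unfolding P_def mean_gap_sum_of_squares[OF assms] using assms by simp_all
  then show ?thesis by (simp add: zero_le_mult_iff)
qed

lemma mean_gap_eq_0_iff:
  assumes "k > 0"
  shows "mean_gap k a b c = 0 \<longleftrightarrow> b = 9/2 * a \<and> c = 3*k/2 * a"
proof -
  define p q where "p = b - 9/2 * a" and "q = c - 3*k/2 * a"
  define P Q where "P = 2 * k * (3*k + 5) * (3*k + 11)" and "Q = 4 * (k + 1) * (3*k + 11)"
  have sos: "P * mean_gap k a b c = (k * (3*k + 5) * p - (9*k + 11) * q)\<^sup>2 + Q * q\<^sup>2"
    unfolding P_def Q_def p_def q_def by (rule mean_gap_sum_of_squares[OF assms])
  have "P \<noteq> 0" "Q > 0" "k * (3*k + 5) \<noteq> 0"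
    unfolding P_def Q_def using assms by simp_all
  then have "mean_gap k a b c = 0 \<longleftrightarrow> P * mean_gap k a b c = 0"
    by simp
  also have "\<dots> \<longleftrightarrow> k * (3*k + 5) * p - (9*k + 11) * q = 0 \<and> q = 0"
    unfolding sos using \<open>Q > 0\<close> by (simp add: add_nonneg_eq_0_iff)
  also have "\<dots> \<longleftrightarrow> p = 0 \<and> q = 0"
    using \<open>k * (3*k + 5) \<noteq> 0\<close> by auto
  finally show ?thesis
    unfolding p_def q_def by simp
qed

lemma mean_gap_decomposition:
  fixes a b c R k :: real
  assumes "k > 0"
  shows "k * (3*k + 5) / (2 * (3*k + 11)) * (a + b + c)\<^sup>2
         - (- k * a\<^sup>2 - (k + 1) * R + k * (a * (b + c)) + (k + 1) * (((b + c)\<^sup>2 - (b\<^sup>2 + R)) / 2))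
       = mean_gap k a b c + 3/2 * (k + 1) * (R - c\<^sup>2 / k)"
proof -
  define \<alpha> where "\<alpha> = k * (3*k + 5) / (2 * (3*k + 11))"
  define \<gamma> where "\<gamma> = (k + 1) * (k - 3) / (2 * k)"
  define w where "w = c\<^sup>2 / k"
  have "\<gamma> * (2 * k) = (k + 1) * (k - 3)" "w * k = c\<^sup>2"
    using assms by (simp_all add: \<gamma>_def w_def)
  then show ?thesis
    unfolding mean_gap_def \<alpha>_def[symmetric] \<gamma>_def[symmetric] w_def[symmetric] by algebra
qed

lemma all_eq_mean_and_sum_iff:
  fixes f :: "'a \<Rightarrow> real" and t :: real
  assumes "finite A" "A \<noteq> {}"
  shows "(\<forall>i\<in>A. f i = sum f A / card A) \<and> sum f A = card A * t \<longleftrightarrow> (\<forall>i\<in>A. f i = t)"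
  using assms by auto

lemma mainTheorem7_gap_eq:
  fixes n r :: nat and y :: "nat \<Rightarrow> real"
  assumes "n \<ge> 3" and "r \<in> {2..n}"
  defines "A \<equiv> {2..n} - {r}" and "k \<equiv> real (n - 2)"
  shows "(real (3 * n - 1) * real (n - 2)) / (2 * real (3 * n + 5)) * (\<Sum>i=1..n. y i)\<^sup>2
       - (- real (n - 2) * (y 1)\<^sup>2
           - real (n - 1) * (\<Sum>i\<in>{1..n} - {1, r}. (y i)\<^sup>2)
           + real (n - 2) * (\<Sum>i=2..n. y 1 * y i)
           + real (n - 1) * (\<Sum>(i, j)\<in>{(i, j). 2 \<le> i \<and> i < j \<and> j \<le> n}. y i * y j))
       = mean_gap k (y 1) (y r) (sum y A) + 3/2 * (k + 1) * (\<Sum>i\<in>A. (y i - sum y A / k)\<^sup>2)"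
proof -
  define a b c R where "a = y 1" and "b = y r" and "c = sum y A" and "R = (\<Sum>i\<in>A. (y i)\<^sup>2)"
  have A: "finite A" "r \<notin> A" "1 \<notin> A" "r \<noteq> 1" "card A = n - 2"
    using assms(1,2) by (auto simp: A_def card_Diff_singleton)
  then have card: "card A = k"
    by (simp add: k_def)
  have "A \<noteq> {}"
    using A(5) assms(1) by (intro notI) simp
  have "{2..n} = insert r A" "{1..n} = insert 1 (insert r A)" "{1..n} - {1, r} = A"
    using assms(1,2) by (auto simp: A_def)
  then have sum_from_2: "(\<Sum>i=2..n. f i) = f r + sum f A"
    and sum_from_1: "(\<Sum>i=1..n. f i) = f 1 + f r + sum f A"
    and sum_without_1_r: "(\<Sum>i\<in>{1..n} - {1, r}. f i) = sum f A" for f :: "nat \<Rightarrow> real"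
    using A(1-4) by (simp_all add: add.assoc)
  have mixed: "(\<Sum>i=2..n. y 1 * y i) = a * (b + c)"
    unfolding sum_from_2 a_def b_def c_def by (simp add: sum_distrib_left distrib_left)
  have "{(i, j). 2 \<le> i \<and> i < j \<and> j \<le> n} = {(i, j). i \<in> {2..n} \<and> j \<in> {2..n} \<and> i < j}"
    by auto
  then have pairs: "(\<Sum>(i, j)\<in>{(i, j). 2 \<le> i \<and> i < j \<and> j \<le> n}. y i * y j)
      = ((b + c)\<^sup>2 - (b\<^sup>2 + R)) / 2"
    using sum_pairs_less[of "{2..n}" y] unfolding sum_from_2 b_def c_def R_def by simp
  have coeffs: "real (n - 1) = k + 1" "real (3 * n - 1) * real (n - 2) = k * (3*k + 5)"
      "real (3 * n + 5) = 3*k + 11"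
    and "k > 0"
    using assms(1,2) by (auto simp: k_def)
  have deviation: "(\<Sum>i\<in>A. (y i - c / k)\<^sup>2) = R - c\<^sup>2 / k"
    using sum_squares_deviation_mean[OF \<open>finite A\<close> \<open>A \<noteq> {}\<close>] unfolding card c_def R_def .
  show ?thesis
    unfolding mixed pairs coeffs
    unfolding sum_from_1 sum_without_1_r k_def[symmetric]
      a_def[symmetric] b_def[symmetric] c_def[symmetric] R_def[symmetric] deviation
    by (rule mean_gap_decomposition[OF \<open>k > 0\<close>])
qed

theorem mainTheorem7:
  fixes n r :: nat and y :: "nat \<Rightarrow> real"
  assumes "n \<ge> 3" and "r \<in> {2..n}"
  shows "(- real (n - 2) * (y 1)\<^sup>2
           - real (n - 1) * (\<Sum>i\<in>{1..n} - {1, r}. (y i)\<^sup>2)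
           + real (n - 2) * (\<Sum>i=2..n. y 1 * y i)
           + real (n - 1) * (\<Sum>(i, j)\<in>{(i, j). 2 \<le> i \<and> i < j \<and> j \<le> n}. y i * y j)
         \<le> (real (3 * n - 1) * real (n - 2)) / (2 * real (3 * n + 5)) * (\<Sum>i=1..n. y i)\<^sup>2)
       \<and> ((- real (n - 2) * (y 1)\<^sup>2
           - real (n - 1) * (\<Sum>i\<in>{1..n} - {1, r}. (y i)\<^sup>2)
           + real (n - 2) * (\<Sum>i=2..n. y 1 * y i)
           + real (n - 1) * (\<Sum>(i, j)\<in>{(i, j). 2 \<le> i \<and> i < j \<and> j \<le> n}. y i * y j)
         = (real (3 * n - 1) * real (n - 2)) / (2 * real (3 * n + 5)) * (\<Sum>i=1..n. y i)\<^sup>2)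
         \<longleftrightarrow> ((\<forall>i\<in>{2..n} - {r}. y i = 3 / 2 * y 1) \<and> y r = 9 / 2 * y 1))" (is "(?L \<le> ?R) \<and> (?L = ?R \<longleftrightarrow> ?equality_case)")
proof -
  define A k where "A = {2..n} - {r}" and "k = real (n - 2)"
  define G V where "G = mean_gap k (y 1) (y r) (sum y A)" and "V = (\<Sum>i\<in>A. (y i - sum y A / k)\<^sup>2)"
  have "finite A" "card A = n - 2" "k > 0"
    using assms by (auto simp: A_def k_def card_Diff_singleton)
  then have A: "finite A" "A \<noteq> {}" "card A = k"
    using assms(1) by (auto simp: k_def)
  have gap: "?R - ?L = G + 3/2 * (k + 1) * V"
    unfolding G_def V_def A_def k_def by (rule mainTheorem7_gap_eq[OF assms])
  have "V \<ge> 0"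
    unfolding V_def by (intro sum_nonneg) simp
  then have "G \<ge> 0" "3/2 * (k + 1) * V \<ge> 0"
    unfolding G_def using \<open>k > 0\<close> by (simp_all add: mean_gap_nonneg)
  then have "?L \<le> ?R" using gap by linarith
  have "?L = ?R \<longleftrightarrow> G + 3/2 * (k + 1) * V = 0"
    unfolding gap[symmetric] right_minus_eq by (rule eq_commute)
  also have "\<dots> \<longleftrightarrow> G = 0 \<and> V = 0"
    using \<open>G \<ge> 0\<close> \<open>3/2 * (k + 1) * V \<ge> 0\<close> \<open>k > 0\<close> by (simp add: add_nonneg_eq_0_iff)
  also have "\<dots> \<longleftrightarrow> y r = 9/2 * y 1 \<and> (\<forall>i\<in>A. y i = sum y A / k) \<and> sum y A = k * (3/2 * y 1)"
  proof -
    have "V = 0 \<longleftrightarrow> (\<forall>i\<in>A. y i = sum y A / k)"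
      unfolding V_def using A(1) by (simp add: sum_nonneg_eq_0_iff)
    moreover have "G = 0 \<longleftrightarrow> y r = 9/2 * y 1 \<and> sum y A = k * (3/2 * y 1)"
      unfolding G_def mean_gap_eq_0_iff[OF \<open>k > 0\<close>] by (simp add: mult_ac)
    ultimately show ?thesis by blast
  qed
  also have "\<dots> \<longleftrightarrow> ?equality_case"
    using all_eq_mean_and_sum_iff[OF A(1,2), where f = y and t = "3/2 * y 1"]
    unfolding A(3) A_def[symmetric] by blast
  finally show ?thesis using \<open>?L \<le> ?R\<close> by blast
qed

end
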